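(* Let $n\ge1$, $\eta>0$, $\gamma\ne0$, nonzero vectors $X_1,\dots,X_n\in\mathbb{R}^d$, and reals $a_1,\dots,a_n>0$. Let $f_a(z)=z\big(z^2+(a-2)z+1-2a\big)$. For an initial vector $z^{(0)}=(z_1^{(0)},\dots,z_n^{(0)})$ define $z_i^{(t+1)}=f_{a_i}(z_i^{(t)})$ and $$\ell_t=\sum_{i=1}^n\frac{n\,(z_i^{(t)})^2}{2\eta^2\gamma^2\|X_i\|^4}.$$ (This is the training loss $\ell(w^{(t)})$ of gradient descent in the mutually orthogonal generalized phase retrieval problem $\min_w\frac1{2n}\sum_i(\frac\gamma2(X_i^\top w)^2+c(X_i)X_i^\top w-y_i)^2$, with $z_i^{(t)}=\frac{\eta\gamma\|X_i\|^2}{n}(g(w^{(t)};X_i)-y_i)$ and $a_i=\frac{\eta\gamma\|X_i\|^2}{n}(y_i+\frac{c(X_i)^2}{2\gamma})$.) Then for Lebesgue-almost every $z^{(0)}\in\{z:-a_i\le z_i\le2\text{ for all }i\}$: \begin{itemize} \item if $0<\max_i a_i\le1$, then $\lim_{t\to\infty}\ell_t=0$; moreover if $0<\max_ia_i\le2\sqrt2-2$, then $(\ell_t)_{t\ge0}$ is decreasing; \item if $1<\max_ia_i\le2$, then $(\ell_t)_{t\ge0}$ is bounded and does not converge to $0$; \item if $\max_ia_i>2$, then $\lim_{t\to\infty}\ell_t=+\infty$. \end{itemize} *)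

theory Defs
  imports "HOL-Analysis.Analysis"
begin

definition fmap :: "real \<Rightarrow> real \<Rightarrow> real" where
  "fmap a z = z * (z^2 + (a - 2) * z + 1 - 2 * a)"

definition traj :: "('n::finite \<Rightarrow> real) \<Rightarrow> real ^ 'n \<Rightarrow> nat \<Rightarrow> 'n \<Rightarrow> real" where
  "traj a z0 t i = (fmap (a i) ^^ t) (z0 $ i)"

definition loss :: "real \<Rightarrow> real \<Rightarrow> ('n::finite \<Rightarrow> real ^ 'd) \<Rightarrow> ('n \<Rightarrow> real)
    \<Rightarrow> real ^ 'n \<Rightarrow> nat \<Rightarrow> real" where
  "loss \<eta> \<gamma> X a z0 t =
     (\<Sum>i\<in>UNIV. real CARD('n) * (traj a z0 t i)^2 / (2 * \<eta>^2 * \<gamma>^2 * norm (X i)^4))"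

definition init_box :: "('n::finite \<Rightarrow> real) \<Rightarrow> (real ^ 'n) set" where
  "init_box a = {z. \<forall>i. - a i \<le> z $ i \<and> z $ i \<le> 2}"

end

theory Submission
  imports Defs
begin

(* The coordinates evolve independently, z_i^(t) = f_{a_i}^t (z_i^(0)), and the loss is a weighted
   sum of their squares with positive weights, so everything reduces to the dynamics of f_a on
   [-a, 2]. Its fixed points are -a, 0 and 2, and f_a 1 = -a.

   For a <= 2 the interval [-a, 2] is invariant. For a <= 1 an orbit in (1, 2) drifts down into
   (-a, 1), where |z| + max(z, 0)^2 is a strict Lyapunov function, so the orbit tends to 0.
   For a > 1 the fixed point 0 is repelling, so an orbit can only converge to 0 by hitting it.

   For a > 2 an orbit leaving [-a, 2] exceeds 2 and then grows at least linearly. The set K of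
   orbits trapped in [-a, 2] is null: in the coordinate phi x = arcsin ((2 x + a - 2) / (a + 2)),
   whose derivative is the arcsine density 1 / sqrt ((2 - x) (x + a)) of [-a, 2], each of the three
   monotone branches of f_a expands by a factor kappa > 3, so the phi-measure of K is at most
   3 / kappa times itself.

   Since f_a has finite fibres, the orbits hitting a fixed point form a countable set; together
   with K these are the only exceptional initial values, and a set that is null in each
   coordinate is null in R^n. *)

section \<open>Orbits of maps\<close>

(* A form of LaSalle's invariance principle. *)
lemma orbit_lyapunov_limit_point:
  fixes f :: "'a::metric_space \<Rightarrow> 'a" and V :: "'a \<Rightarrow> real"
  assumes C: "compact C" "continuous_on C f" "continuous_on C V"
    and u: "\<And>t. u t \<in> C" "\<And>t. u (Suc t) = f (u t)"
    and dec: "\<And>t. V (u (Suc t)) \<le> V (u t)"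
  obtains c where "c \<in> C" "(\<lambda>t. V (u t)) \<longlonglongrightarrow> V c" "V (f c) = V c"
    "\<And>e. e > 0 \<Longrightarrow> \<exists>t. dist (u t) c < e"
proof -
  obtain m where "m \<in> C" "\<And>y. y \<in> C \<Longrightarrow> V m \<le> V y"
    using continuous_attains_inf[OF C(1) _ C(3)] u(1) by blast
  then obtain L where L: "(\<lambda>t. V (u t)) \<longlonglongrightarrow> L"
    using decseq_convergent[of "\<lambda>t. V (u t)"] dec u(1) by (metis decseq_Suc_iff)
  obtain c r where c: "c \<in> C" "strict_mono r" "(u \<circ> r) \<longlonglongrightarrow> c"
    using compact_imp_seq_compact[OF C(1)] u(1) by (metis seq_compactE)
  have "(\<lambda>k. V (u (r k))) \<longlonglongrightarrow> V c"
    using continuous_on_tendsto_compose[OF C(3) c(3)] c(1) u(1) by (simp add: o_def)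
  moreover have "(\<lambda>k. V (u (r k))) \<longlonglongrightarrow> L"
    using LIMSEQ_subseq_LIMSEQ[OF L c(2)] by (simp add: o_def)
  ultimately have Lc: "L = V c"
    using LIMSEQ_unique by blast
  have fc: "(\<lambda>k. u (Suc (r k))) \<longlonglongrightarrow> f c"
    using continuous_on_tendsto_compose[OF C(2) c(3)] c(1) u by (simp add: o_def)
  moreover have "f c \<in> C"
    using closed_sequentially[OF compact_imp_closed[OF C(1)] _ fc] u(1) by blast
  ultimately have "(\<lambda>k. V (u (Suc (r k)))) \<longlonglongrightarrow> V (f c)"
    using continuous_on_tendsto_compose[OF C(3) fc] u(1) by simp
  moreover have "(\<lambda>k. V (u (Suc (r k)))) \<longlonglongrightarrow> L"
    using LIMSEQ_subseq_LIMSEQ[OF LIMSEQ_Suc[OF L] c(2)] by (simp add: o_def)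
  ultimately have "V (f c) = V c"
    using Lc LIMSEQ_unique by blast
  moreover have "\<exists>t. dist (u t) c < e" if "e > 0" for e
    using c(3) that by (metis comp_apply lim_sequentially order_refl)
  ultimately show ?thesis
    using that c(1) L Lc by blast
qed

lemma orbit_tendsto_repelling_fixpoint:
  fixes f :: "'a::real_normed_vector \<Rightarrow> 'a"
  assumes "0 < d" and repel: "\<And>z. z \<noteq> 0 \<Longrightarrow> norm z < d \<Longrightarrow> norm z < norm (f z)"
    and lim: "(\<lambda>t. (f ^^ t) x) \<longlonglongrightarrow> 0"
  obtains t where "(f ^^ t) x = 0"
proof (rule ccontr)
  assume "\<not> thesis"
  then have nonzero: "(f ^^ t) x \<noteq> 0" for t
    using that by blast
  obtain N where N: "\<And>t. N \<le> t \<Longrightarrow> norm ((f ^^ t) x) < d"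
    using LIMSEQ_D[OF lim \<open>0 < d\<close>] by auto
  have grow: "norm ((f ^^ N) x) \<le> norm ((f ^^ (k + N)) x)" for k
  proof (induction k)
    case (Suc k)
    then show ?case
      using repel[OF nonzero N[of "k + N"]] by simp
  qed simp
  have "(\<lambda>k. norm ((f ^^ (k + N)) x)) \<longlonglongrightarrow> 0"
    using LIMSEQ_ignore_initial_segment[OF lim, of N] by (simp add: tendsto_norm_zero)
  then have "norm ((f ^^ N) x) \<le> 0"
    using grow by (intro LIMSEQ_le_const) auto
  then show False
    using nonzero[of N] by simp
qed

lemma continuous_on_funpow:
  fixes f :: "'a::topological_space \<Rightarrow> 'a"
  assumes "continuous_on UNIV f"
  shows "continuous_on UNIV (f ^^ n)"
proof (induction n)
  case (Suc n)
  then show ?case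
    using continuous_on_compose2[OF assms Suc] by simp
qed (simp add: continuous_on_id)

lemma countable_orbits_hitting_finite_set:
  fixes f :: "'a \<Rightarrow> 'a"
  assumes S: "finite S" and fibres: "\<And>c. finite (f -` {c})"
  shows "countable {x. \<exists>t. (f ^^ t) x \<in> S}"
proof -
  have fin_vimage: "finite (f -` A)" if "finite A" for A
  proof -
    have "f -` A = (\<Union>c\<in>A. f -` {c})"
      by auto
    then show ?thesis
      using that fibres by simp
  qed
  have "finite ((f ^^ t) -` S)" for t
  proof (induction t)
    case (Suc t)
    have "(f ^^ Suc t) -` S = f -` ((f ^^ t) -` S)"
      by (simp only: funpow_Suc_right vimage_comp)
    then show ?case
      using fin_vimage[OF Suc.IH] by metis
  qed (simp add: S)
  moreover have "{x. \<exists>t. (f ^^ t) x \<in> S} = (\<Union>t. (f ^^ t) -` S)"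
    by auto
  ultimately show ?thesis
    by (simp add: countable_finite)
qed


section \<open>Lebesgue measure\<close>

lemma null_sets_lborel_inner_vimage:
  fixes b :: "'a::euclidean_space"
  assumes N: "N \<in> null_sets lborel" and b: "b \<in> Basis"
  shows "{x::'a. x \<bullet> b \<in> N} \<in> null_sets lborel"
proof -
  have N_borel: "N \<in> sets borel"
    using null_setsD2[OF N] by simp
  define g where "g c = (if c = b then indicator N else (\<lambda>_. 1::ennreal))" for c :: 'a
  have indicator_prod: "indicator {x::'a. x \<bullet> b \<in> N} x = (\<Prod>c\<in>Basis. g c (x \<bullet> c))" for x
    using b by (simp add: g_def indicator_def if_distrib[of "\<lambda>f. f _"] cong: prod.cong)
  have sets: "{x::'a. x \<bullet> b \<in> N} \<in> sets borel"
    using measurable_sets[of "\<lambda>x::'a. x \<bullet> b" borel borel N] N_borel by (simp add: vimage_def)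
  have "emeasure lborel {x::'a. x \<bullet> b \<in> N} = (\<integral>\<^sup>+x. (\<Prod>c\<in>Basis. g c (x \<bullet> c)) \<partial>lborel)"
    using sets by (simp flip: indicator_prod)
  also have "\<dots> = (\<Prod>c\<in>Basis. (\<integral>\<^sup>+x. g c x \<partial>lborel))"
    using N_borel by (intro nn_integral_lborel_prod) (auto simp: g_def)
  also have "\<dots> = 0"
    using b N_borel null_setsD1[OF N] by (intro prod_zero bexI[of _ b]) (auto simp: g_def)
  finally show ?thesis
    using sets by (simp add: null_sets_def)
qed

lemma AE_lebesgue_components_not_in:
  fixes N :: "'n::finite \<Rightarrow> real set"
  assumes "\<And>i. N i \<in> null_sets lborel"
  shows "AE z in lebesgue. \<forall>i. z $ i \<notin> N i"
proof -
  have "{z::real^'n. z $ i \<in> N i} \<in> null_sets lborel" for i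
    using null_sets_lborel_inner_vimage[OF assms[of i], of "axis i (1::real)"]
    by (simp add: cart_eq_inner_axis)
  then have "AE z in lborel. z $ i \<notin> N i" for i
    using AE_not_in by fastforce
  then have "AE z in lborel. \<forall>i\<in>UNIV. z $ i \<notin> N i"
    by (intro AE_finite_allI) auto
  then show ?thesis
    by (auto dest: AE_completion)
qed

lemma inj_on_interval_if_deriv_nonzero:
  fixes f :: "real \<Rightarrow> real"
  assumes deriv: "\<And>x. l < x \<Longrightarrow> x < u \<Longrightarrow> (f has_real_derivative f' x) (at x)"
    and nonzero: "\<And>x. l < x \<Longrightarrow> x < u \<Longrightarrow> f' x \<noteq> 0"
  shows "inj_on f {l<..<u}"
proof -
  have "f x \<noteq> f y" if xy: "l < x" "x < y" "y < u" for x y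
  proof
    assume "f x = f y"
    moreover have "\<exists>D. DERIV f z :> D" if "x \<le> z" "z \<le> y" for z
      using xy that deriv[of z] by auto
    then have "continuous_on {x..y} f"
      by (rule DERIV_atLeastAtMost_imp_continuous_on)
    moreover have "f differentiable (at z)" if "x < z" "z < y" for z
      unfolding real_differentiable_def using xy that deriv[of z] by auto
    ultimately obtain z where "x < z" "z < y" "DERIV f z :> 0"
      using Rolle[OF \<open>x < y\<close>] by blast
    then show False
      using xy deriv[of z] nonzero[of z] DERIV_unique by force
  qed
  then show ?thesis
    unfolding inj_on_def by (metis greaterThanLessThan_iff linorder_neqE_linordered_idom)
qed

lemma sets_lebesgue_image_if_real_derivative:
  fixes g :: "real \<Rightarrow> real"
  assumes "S \<in> sets lebesgue" "\<And>x. x \<in> S \<Longrightarrow> (g has_real_derivative g' x) (at x within S)"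
  shows "g ` S \<in> sets lebesgue"
proof (rule differentiable_image_in_sets_lebesgue[OF assms(1)])
  show "g differentiable_on S"
    using assms(2) by (auto simp: differentiable_on_def has_field_derivative_def intro: differentiableI)
qed simp

lemma integral_abs_derivative_eq_measure_image:
  fixes g :: "real \<Rightarrow> real"
  assumes S: "S \<in> sets lebesgue"
    and deriv: "\<And>x. x \<in> S \<Longrightarrow> (g has_real_derivative g' x) (at x within S)"
    and inj: "inj_on g S" and meas: "g ` S \<in> lmeasurable"
  shows "(\<lambda>x. \<bar>g' x\<bar>) integrable_on S" "integral S (\<lambda>x. \<bar>g' x\<bar>) = measure lebesgue (g ` S)"
proof -
  have "(\<lambda>_. 1::real) absolutely_integrable_on g ` S
      \<and> integral (g ` S) (\<lambda>_. 1::real) = measure lebesgue (g ` S)"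
    using meas by (simp add: absolutely_integrable_on_iff_nonneg integrable_on_const lmeasure_integral)
  then have "(\<lambda>x. \<bar>g' x\<bar> * 1) absolutely_integrable_on S
      \<and> integral S (\<lambda>x. \<bar>g' x\<bar> * 1) = measure lebesgue (g ` S)"
    using has_absolute_integral_change_of_variables_1'[OF S deriv inj, of "\<lambda>_. 1" "measure lebesgue (g ` S)"]
    by (simp only:)
  then show "(\<lambda>x. \<bar>g' x\<bar>) integrable_on S" "integral S (\<lambda>x. \<bar>g' x\<bar>) = measure lebesgue (g ` S)"
    by (simp_all add: absolutely_integrable_on_def)
qed

lemma measure_image_le_by_derivative:
  fixes g h :: "real \<Rightarrow> real"
  assumes S: "S \<in> sets lebesgue"
    and g: "\<And>x. x \<in> S \<Longrightarrow> (g has_real_derivative g' x) (at x within S)"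
      "inj_on g S" "g ` S \<in> lmeasurable"
    and h: "\<And>x. x \<in> S \<Longrightarrow> (h has_real_derivative h' x) (at x within S)"
      "inj_on h S" "h ` S \<in> lmeasurable"
    and le: "\<And>x. x \<in> S \<Longrightarrow> c * \<bar>g' x\<bar> \<le> \<bar>h' x\<bar>"
  shows "c * measure lebesgue (g ` S) \<le> measure lebesgue (h ` S)"
proof -
  note G = integral_abs_derivative_eq_measure_image[OF S g]
    and H = integral_abs_derivative_eq_measure_image[OF S h]
  have "c * measure lebesgue (g ` S) = integral S (\<lambda>x. c * \<bar>g' x\<bar>)"
    using G by simp
  also have "\<dots> \<le> integral S (\<lambda>x. \<bar>h' x\<bar>)"
    using integrable_on_mult_right[OF G(1)] H(1) le by (intro integral_le) auto
  also have "\<dots> = measure lebesgue (h ` S)"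
    using H by simp
  finally show ?thesis .
qed


lemma measure_le_sum_if_covered:
  assumes "A \<in> sets lebesgue" "A \<subseteq> N \<union> (\<Union>i\<in>I. B i)" "negligible N" "finite I"
    and B: "\<And>i. i \<in> I \<Longrightarrow> B i \<in> lmeasurable"
  shows "measure lebesgue A \<le> (\<Sum>i\<in>I. measure lebesgue (B i))"
proof -
  have U: "(\<Union>i\<in>I. B i) \<in> lmeasurable"
    using assms by (intro fmeasurable.finite_UN) auto
  have "N \<union> (\<Union>i\<in>I. B i) \<in> lmeasurable"
    by (rule fmeasurable.Un[OF negligible_imp_measurable[OF assms(3)] U])
  then have "measure lebesgue A \<le> measure lebesgue (N \<union> (\<Union>i\<in>I. B i))"
    using assms(1,2) by (intro measure_mono_fmeasurable)
  also have "\<dots> = measure lebesgue (\<Union>i\<in>I. B i)"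
    using measure_Un_null_set[OF fmeasurableD[OF U], of N] assms(3)
    by (simp add: Un_commute negligible_iff_null_sets)
  also have "\<dots> \<le> (\<Sum>i\<in>I. measure lebesgue (B i))"
    using assms by (intro measure_UNION_le) (auto dest: fmeasurableD)
  finally show ?thesis .
qed

section \<open>Weighted sums of squares\<close>

lemma weighted_sum_squares_tendsto_zero_iff:
  fixes w :: "'i::finite \<Rightarrow> real"
  assumes w: "\<And>i. 0 < w i"
  shows "(\<lambda>t. \<Sum>i\<in>UNIV. w i * (u i t)^2) \<longlonglongrightarrow> 0 \<longleftrightarrow> (\<forall>i. u i \<longlonglongrightarrow> 0)"
proof
  assume sum: "(\<lambda>t. \<Sum>i\<in>UNIV. w i * (u i t)^2) \<longlonglongrightarrow> 0"
  show "\<forall>i. u i \<longlonglongrightarrow> 0"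
  proof
    fix j
    have "w j * (u j t)^2 \<le> (\<Sum>i\<in>UNIV. w i * (u i t)^2)" for t
      using w by (intro member_le_sum mult_nonneg_nonneg) (auto intro: less_imp_le)
    then have "(\<lambda>t. w j * (u j t)^2) \<longlonglongrightarrow> 0"
      using w[of j] by (intro tendsto_sandwich[OF _ _ tendsto_const sum]) auto
    then have "(\<lambda>t. (u j t)^2) \<longlonglongrightarrow> 0"
      using w[of j] tendsto_mult_left[of _ 0 sequentially "1 / w j"] by simp
    then show "u j \<longlonglongrightarrow> 0"
      by simp
  qed
next
  assume "\<forall>i. u i \<longlonglongrightarrow> 0"
  then have "(\<lambda>t. \<Sum>i\<in>UNIV. w i * (u i t)^2) \<longlonglongrightarrow> (\<Sum>i\<in>UNIV. w i * 0^2)"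
    by (intro tendsto_intros) auto
  then show "(\<lambda>t. \<Sum>i\<in>UNIV. w i * (u i t)^2) \<longlonglongrightarrow> 0"
    by simp
qed

lemma weighted_sum_squares_at_top:
  fixes w :: "'i::finite \<Rightarrow> real"
  assumes "\<And>i. 0 \<le> w i" "0 < w j" "filterlim (u j) at_top sequentially"
  shows "filterlim (\<lambda>t. \<Sum>i\<in>UNIV. w i * (u i t)^2) at_top sequentially"
proof (rule filterlim_at_top_mono)
  show "filterlim (\<lambda>t. w j * (u j t)^2) at_top sequentially"
    using assms(2,3) by (intro filterlim_tendsto_pos_mult_at_top[OF tendsto_const] filterlim_pow_at_top) auto
  show "\<forall>\<^sub>F t in sequentially. w j * (u j t)^2 \<le> (\<Sum>i\<in>UNIV. w i * (u i t)^2)"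
    using assms(1) by (intro always_eventually allI member_le_sum) auto
qed

lemma Bseq_weighted_sum_squares:
  fixes w :: "'i::finite \<Rightarrow> real"
  assumes "\<And>i t. \<bar>u i t\<bar> \<le> B"
  shows "Bseq (\<lambda>t. \<Sum>i\<in>UNIV. w i * (u i t)^2)"
proof (rule BseqI')
  fix t
  have "\<bar>w i * (u i t)^2\<bar> \<le> \<bar>w i\<bar> * B^2" for i
  proof -
    have "(u i t)^2 \<le> B^2"
      using assms[of i t] by (simp add: power2_le_iff_abs_le order_trans[OF abs_ge_zero])
    then show ?thesis
      by (simp add: abs_mult mult_left_mono)
  qed
  then show "norm (\<Sum>i\<in>UNIV. w i * (u i t)^2) \<le> (\<Sum>i\<in>UNIV. \<bar>w i\<bar> * B^2)"
    unfolding real_norm_def by (intro order.trans[OF sum_abs sum_mono])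
qed

lemma decseq_weighted_sum_squares:
  fixes w :: "'i::finite \<Rightarrow> real"
  assumes "\<And>i. 0 \<le> w i" "\<And>i t. \<bar>u i (Suc t)\<bar> \<le> \<bar>u i t\<bar>"
  shows "decseq (\<lambda>t. \<Sum>i\<in>UNIV. w i * (u i t)^2)"
  using assms by (intro decseq_SucI sum_mono mult_left_mono) (auto simp: abs_le_square_iff)


section \<open>Elementary properties of the cubic map\<close>

lemma fmap_add_eq: "fmap a z + a = (z + a) * (z - 1)^2"
  unfolding fmap_def by (simp add: power2_eq_square algebra_simps)

lemma fmap_diff_two_eq: "fmap a z - 2 = (z - 2) * (z^2 + a * z + 1)"
  unfolding fmap_def by (simp add: power2_eq_square algebra_simps)

lemma fmap_diff_self_eq: "fmap a z - z = z * (z + a) * (z - 2)"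
  unfolding fmap_def by (simp add: power2_eq_square algebra_simps)

lemma fmap_eq_mult: "fmap a z = z * (1 - (z + a) * (2 - z))"
  unfolding fmap_def by (simp add: power2_eq_square algebra_simps)

lemma fmap_one: "fmap a 1 = -a"
  by (simp add: fmap_def)

lemma prod_dist_endpoints_fmap:
  "(2 - fmap a x) * (fmap a x + a) = (2 - x) * (x + a) * ((x - 1)^2 * (x^2 + a * x + 1))"
  by (simp add: fmap_def power2_eq_square algebra_simps)

lemma fmap_has_real_derivative:
  "(fmap a has_real_derivative (z - 1) * (3 * z + 2 * a - 1)) (at z within S)"
  unfolding fmap_def
  by (rule derivative_eq_intros refl | simp add: power2_eq_square algebra_simps)+

lemma continuous_on_fmap: "continuous_on S (fmap a)"
  unfolding fmap_def by (intro continuous_intros)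

lemma finite_fmap_vimage_singleton: "finite (fmap a -` {c})"
proof -
  have "fmap a -` {c} = {z. poly [:-c, 1 - 2 * a, a - 2, 1:] z = 0}"
    by (auto simp: fmap_def power2_eq_square algebra_simps)
  moreover have "[:-c, 1 - 2 * a, a - 2, 1:] \<noteq> 0"
    by simp
  ultimately show ?thesis
    using poly_roots_finite by metis
qed

lemma fmap_ge: "-a \<le> z \<Longrightarrow> -a \<le> fmap a z"
  using fmap_add_eq[of a z] by (smt (verit) zero_le_mult_iff zero_le_power2)

lemma fmap_le_two:
  assumes "0 < a" "a \<le> 2" "z \<le> 2"
  shows "fmap a z \<le> 2"
proof -
  have "z^2 + a * z + 1 = (z + a/2)^2 + (1 - a^2/4)"
    by (simp add: power2_eq_square algebra_simps)
  moreover have "a^2/4 \<le> 1"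
    using power_mono[of a 2 2] assms by simp
  ultimately have "z^2 + a * z + 1 \<ge> 0"
    using zero_le_power2[of "z + a/2"] by linarith
  then show ?thesis
    using fmap_diff_two_eq[of a z] assms(3) by (smt (verit) mult_nonpos_nonneg)
qed

lemma funpow_fmap_mem_box:
  assumes "0 < a" "a \<le> 2" "-a \<le> x" "x \<le> 2"
  shows "-a \<le> (fmap a ^^ t) x \<and> (fmap a ^^ t) x \<le> 2"
  by (induction t) (use assms fmap_ge fmap_le_two in auto)

(* fmap a z = z (1 - p) with 0 <= p = (z + a) (2 - z) <= ((a + 2) / 2)^2, which is at most 2
   exactly when a <= 2 sqrt 2 - 2. *)
lemma abs_fmap_le:
  assumes "0 < a" "a \<le> 2 * sqrt 2 - 2" "-a \<le> z" "z \<le> 2"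
  shows "\<bar>fmap a z\<bar> \<le> \<bar>z\<bar>"
proof -
  define p where "p = (z + a) * (2 - z)"
  have "(a + 2)^2 \<le> (2 * sqrt 2)^2"
    using assms by (intro power_mono) auto
  then have "(4 - 4 * a - a^2)/4 \<ge> 0"
    by (simp add: power2_eq_square algebra_simps)
  moreover have "2 - p = (z - (2 - a)/2)^2 + (4 - 4 * a - a^2)/4"
    unfolding p_def by (simp add: power2_eq_square field_simps)
  ultimately have "p \<le> 2"
    using zero_le_power2[of "z - (2 - a)/2"] by linarith
  moreover have "p \<ge> 0"
    unfolding p_def using assms by simp
  ultimately have "\<bar>1 - p\<bar> \<le> 1"
    by auto
  then show ?thesis
    by (simp add: fmap_eq_mult p_def[symmetric] abs_mult mult_left_le)
qed

lemma abs_funpow_fmap_Suc_le: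
  assumes "0 < a" "a \<le> 2 * sqrt 2 - 2" "-a \<le> x" "x \<le> 2"
  shows "\<bar>(fmap a ^^ Suc t) x\<bar> \<le> \<bar>(fmap a ^^ t) x\<bar>"
proof -
  have "sqrt 2 \<le> sqrt 4"
    by (rule real_sqrt_le_mono) simp
  then have "a \<le> 2"
    using assms(2) by simp
  then show ?thesis
    using funpow_fmap_mem_box[OF assms(1) _ assms(3,4)] abs_fmap_le[OF assms(1,2)] by simp
qed


section \<open>Convergence to zero for small parameters\<close>

(* |z| alone is not decreasing: fmap a maps points near 1 to negative points of larger modulus. *)
definition lyap :: "real \<Rightarrow> real" where
  "lyap z = \<bar>z\<bar> + (max z 0)^2"

lemma continuous_on_lyap: "continuous_on S lyap"
  unfolding lyap_def by (intro continuous_intros)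

lemma abs_le_lyap: "\<bar>z\<bar> \<le> lyap z"
  unfolding lyap_def by simp

lemma fmap_maps_lower_interval:
  assumes "0 < a" "a \<le> 1" "-a < z" "z < 1"
  shows "-a < fmap a z \<and> fmap a z < 1"
proof
  show "-a < fmap a z"
    using fmap_add_eq[of a z] assms by (smt (verit) mult_pos_pos zero_less_power2)
  define p where "p = (z + a) * (2 - z)"
  have "0 < p"
    using assms by (simp add: p_def)
  have p_eq: "p = 2 * a + z * (2 - a - z)"
    by (simp add: p_def algebra_simps)
  show "fmap a z < 1"
  proof (cases "z \<le> 0")
    case True
    then have "z * (2 - a - z) \<le> 0"
      using assms by (intro mult_nonpos_nonneg) auto
    then have "\<bar>1 - p\<bar> \<le> 1"
      using \<open>0 < p\<close> p_eq assms by linarith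
    then have "\<bar>fmap a z\<bar> \<le> \<bar>z\<bar>"
      by (simp add: fmap_eq_mult p_def[symmetric] abs_mult mult_left_le)
    then show ?thesis
      using assms True by linarith
  next
    case False
    then have "z * (1 - p) < z * 1"
      using \<open>0 < p\<close> by (intro mult_strict_left_mono) auto
    then show ?thesis
      using assms by (simp add: fmap_eq_mult p_def[symmetric])
  qed
qed

lemma lyap_fmap_less_of_neg:
  assumes "0 < a" "a \<le> 1" "-a < z" "z < 0"
  shows "lyap (fmap a z) < lyap z"
proof -
  define p where "p = (z + a) * (2 - z)"
  have f: "fmap a z = z * (1 - p)"
    by (simp add: fmap_eq_mult p_def)
  have p: "0 < p" "p \<le> (z + 1) * (2 - z)"
    using assms by (auto simp: p_def intro: mult_right_mono)
  show ?thesis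
  proof (cases "p \<le> 1")
    case True
    then show ?thesis
      using p assms by (simp add: lyap_def f abs_mult mult_nonpos_nonneg mult_less_cancel_left_neg)
  next
    case False
    define s q where "s = -z" and "q = p - 1"
    have sq: "0 < s" "0 < q" "q \<le> 1 - s - s^2"
      using False p assms by (auto simp: s_def q_def power2_eq_square algebra_simps)
    then have "q < 1"
      using zero_le_power2[of s] by linarith
    then have "s^2 * q^2 < s^2"
      using sq by (simp add: abs_square_less_1)
    moreover have "s * q \<le> s * (1 - s - s^2)"
      using sq by (intro mult_left_mono) auto
    moreover have "0 < s^3"
      using sq by simp
    ultimately have "s * q + (s * q)^2 < s"
      by (simp add: power_mult_distrib power2_eq_square power3_eq_cube algebra_simps)
    moreover have "fmap a z = s * q"
      by (simp add: f s_def q_def algebra_simps)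
    then have "lyap (fmap a z) = s * q + (s * q)^2"
      using sq by (simp add: lyap_def)
    moreover have "lyap z = s"
      using assms by (simp add: lyap_def s_def)
    ultimately show ?thesis
      by simp
  qed
qed

lemma lyap_fmap_less_of_pos:
  assumes "0 < a" "a \<le> 1" "0 < z" "z < 1"
  shows "lyap (fmap a z) < lyap z"
proof -
  define p where "p = (z + a) * (2 - z)"
  have f: "fmap a z = z * (1 - p)"
    by (simp add: fmap_eq_mult p_def)
  have p: "0 < p" "p \<le> (z + 1) * (2 - z)"
    using assms by (auto simp: p_def intro: mult_right_mono)
  show ?thesis
  proof (cases "p \<le> 1")
    case True
    then have "0 \<le> fmap a z" "fmap a z < z"
      using p assms by (simp_all add: f mult_less_cancel_left1)
    then show ?thesis
      using assms by (simp add: lyap_def add_strict_mono power_strict_mono)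
  next
    case False
    have "(z + 1) * (2 - z) = 2 + z - z^2"
      by (simp add: power2_eq_square algebra_simps)
    then have "p - 1 < 1 + z"
      using p assms by (smt (verit) zero_less_power2)
    then have "z * (p - 1) < z * (1 + z)"
      using assms by (intro mult_strict_left_mono)
    then show ?thesis
      using False assms by (simp add: lyap_def f mult_pos_neg power2_eq_square algebra_simps)
  qed
qed

lemma lyap_fmap_less:
  assumes "0 < a" "a \<le> 1" "-a < z" "z < 1" "z \<noteq> 0"
  shows "lyap (fmap a z) < lyap z"
  using assms lyap_fmap_less_of_neg[of a z] lyap_fmap_less_of_pos[of a z] by linarith

lemma lyap_fmap_eq_imp_zero:
  assumes "0 < a" "a \<le> 1" "-a < c" "c \<le> 1" "lyap (fmap a c) = lyap c"
  shows "c = 0"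
proof (rule ccontr)
  assume "c \<noteq> 0"
  show False
  proof (cases "c = 1")
    case True
    then show False
      using assms by (simp add: lyap_def fmap_one)
  next
    case False
    then show False
      using lyap_fmap_less[of a c] assms \<open>c \<noteq> 0\<close> by simp
  qed
qed

lemma funpow_fmap_mem_lower_interval:
  assumes "0 < a" "a \<le> 1" "-a < x" "x < 1"
  shows "-a < (fmap a ^^ t) x \<and> (fmap a ^^ t) x < 1"
  by (induction t) (use assms fmap_maps_lower_interval in auto)

lemma lyap_funpow_fmap_Suc_le:
  assumes "0 < a" "a \<le> 1" "-a < x" "x < 1"
  shows "lyap ((fmap a ^^ Suc t) x) \<le> lyap ((fmap a ^^ t) x)"
proof (cases "(fmap a ^^ t) x = 0")
  case True
  then show ?thesis
    by (simp add: fmap_def)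
next
  case False
  then show ?thesis
    using lyap_fmap_less[OF assms(1,2)] funpow_fmap_mem_lower_interval[OF assms, of t]
    by (simp add: less_imp_le)
qed

lemma fmap_orbit_tendsto_zero_from_lower:
  assumes a: "0 < a" "a \<le> 1" and x: "-a < x" "x < 1"
  shows "(\<lambda>t. (fmap a ^^ t) x) \<longlonglongrightarrow> 0"
proof -
  define u where "u t = (fmap a ^^ t) x" for t
  have u_Suc: "u (Suc t) = fmap a (u t)" for t
    by (simp add: u_def)
  have u_in: "-a < u t \<and> u t < 1" for t
    unfolding u_def by (rule funpow_fmap_mem_lower_interval[OF a x])
  have lyap_step: "lyap (u (Suc t)) \<le> lyap (u t)" for t
    unfolding u_def by (rule lyap_funpow_fmap_Suc_le[OF a x])
  have "u t \<in> {-a..1}" for t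
    using u_in[of t] by simp
  then obtain c where c: "c \<in> {-a..1}" "(\<lambda>t. lyap (u t)) \<longlonglongrightarrow> lyap c" "lyap (fmap a c) = lyap c"
    and near: "\<And>e. e > 0 \<Longrightarrow> \<exists>t. dist (u t) c < e"
    using orbit_lyapunov_limit_point[of "{-a..1}" "fmap a" lyap u, OF compact_Icc
        continuous_on_fmap continuous_on_lyap _ u_Suc lyap_step]
    by blast
  have lyap_le: "lyap c \<le> lyap (u t)" for t
    using decseq_ge[OF _ c(2)] lyap_step by (simp add: decseq_Suc_iff)
  have "c \<noteq> -a"
  proof
    assume "c = -a"
    \<comment> \<open>The fixed point -a is only approached from (-a, 0), where lyap z = |z| < a = lyap (-a).\<close>
    then obtain t where "dist (u t) (-a) < a"
      using near a by blast
    then have "lyap (u t) < lyap c"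
      using u_in[of t] \<open>c = -a\<close> a by (simp add: lyap_def dist_real_def)
    then show False
      using lyap_le[of t] by simp
  qed
  then have "c = 0"
    using lyap_fmap_eq_imp_zero[OF a _ _ c(3)] c(1) by simp
  then have "(\<lambda>t. lyap (u t)) \<longlonglongrightarrow> 0"
    using c(2) by (simp add: lyap_def)
  moreover have "\<forall>\<^sub>F t in sequentially. norm (u t) \<le> lyap (u t)"
    by (simp add: abs_le_lyap)
  ultimately have "u \<longlonglongrightarrow> 0"
    using Lim_null_comparison[of u "\<lambda>t. lyap (u t)"] by blast
  then show ?thesis
    by (simp add: u_def[abs_def])
qed

lemma fmap_drift_down:
  assumes "0 < a" "1 < z" "z \<le> y" "y < 2"
  shows "fmap a z \<le> z - (1 + a) * (2 - y)"
proof -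
  have "1 + a \<le> z * (z + a)"
    using mult_mono[of 1 z "1 + a" "z + a"] assms by simp
  then have "z * (z + a) * (z - 2) \<le> (1 + a) * (z - 2)"
    using assms by (intro mult_right_mono_neg) auto
  also have "\<dots> \<le> (1 + a) * (y - 2)"
    using assms by (intro mult_left_mono) auto
  finally show ?thesis
    using fmap_diff_self_eq[of a z] by (simp add: algebra_simps)
qed

lemma fmap_orbit_leaves_upper:
  assumes a: "0 < a" "a \<le> 2" and x: "-a \<le> x" "x \<le> 2"
    and avoid: "\<And>t. (fmap a ^^ t) x \<notin> {-a, 2}"
  obtains t where "-a < (fmap a ^^ t) x" "(fmap a ^^ t) x < 1"
proof -
  define u where "u t = (fmap a ^^ t) x" for t
  have u_Suc: "u (Suc t) = fmap a (u t)" for t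
    by (simp add: u_def)
  have u_in: "-a < u t \<and> u t < 2" for t
    using funpow_fmap_mem_box[OF a x, of t] avoid[of t] by (auto simp: u_def)
  have "\<exists>t. u t < 1"
  proof (rule ccontr)
    assume "\<not> (\<exists>t. u t < 1)"
    moreover have "u t \<noteq> 1" for t
      using avoid[of "Suc t"] by (auto simp: u_def fmap_one)
    ultimately have upper: "1 < u t" for t
      by (metis linorder_neqE_linordered_idom)
    define d where "d = (1 + a) * (2 - x)"
    have "0 < d"
      using a u_in[of 0] by (simp add: d_def u_def)
    have drift: "u t \<le> x - real t * d" for t
    proof (induction t)
      case (Suc t)
      have "0 \<le> real t * d"
        using \<open>0 < d\<close> by simp
      then have "u t \<le> x"
        using Suc by linarith
      moreover have "x < 2"
        using u_in[of 0] by (simp add: u_def)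
      ultimately have "u (Suc t) \<le> u t - d"
        using fmap_drift_down[OF a(1) upper[of t]] by (simp add: u_Suc d_def)
      then show ?case
        using Suc by (simp add: algebra_simps)
    qed (simp add: u_def)
    obtain n where "x < real n * d"
      using reals_Archimedean3[OF \<open>0 < d\<close>] by blast
    then show False
      using drift[of n] upper[of n] by linarith
  qed
  then show ?thesis
    using that u_in by (auto simp: u_def)
qed

lemma fmap_orbit_tendsto_zero:
  assumes a: "0 < a" "a \<le> 1" and x: "-a \<le> x" "x \<le> 2"
    and avoid: "\<And>t. (fmap a ^^ t) x \<notin> {-a, 2}"
  shows "(\<lambda>t. (fmap a ^^ t) x) \<longlonglongrightarrow> 0"
proof -
  have "a \<le> 2"
    using a by simp
  then obtain t where "-a < (fmap a ^^ t) x" "(fmap a ^^ t) x < 1"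
    using fmap_orbit_leaves_upper[OF a(1) _ x avoid] by blast
  then have "(\<lambda>k. (fmap a ^^ k) ((fmap a ^^ t) x)) \<longlonglongrightarrow> 0"
    by (rule fmap_orbit_tendsto_zero_from_lower[OF a])
  then have "(\<lambda>k. (fmap a ^^ (k + t)) x) \<longlonglongrightarrow> 0"
    by (simp add: funpow_add)
  then show ?thesis
    by (rule LIMSEQ_offset)
qed


section \<open>Repulsion from zero and escape to infinity\<close>

lemma fmap_repels_zero:
  assumes "1 < a"
  obtains d where "0 < d" "\<And>z. z \<noteq> 0 \<Longrightarrow> \<bar>z\<bar> < d \<Longrightarrow> \<bar>z\<bar> < \<bar>fmap a z\<bar>"
proof -
  have "((\<lambda>z. (z + a) * (2 - z)) \<longlongrightarrow> (0 + a) * (2 - 0)) (at 0)"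
    by (intro tendsto_intros)
  then have "\<forall>\<^sub>F z in at 0. 2 < (z + a) * (2 - z)"
    using assms by (intro order_tendstoD(1)) auto
  then obtain d where "0 < d" and d: "\<And>z. z \<noteq> 0 \<Longrightarrow> \<bar>z\<bar> < d \<Longrightarrow> 2 < (z + a) * (2 - z)"
    by (auto simp: eventually_at dist_real_def)
  have "\<bar>z\<bar> < \<bar>fmap a z\<bar>" if "z \<noteq> 0" "\<bar>z\<bar> < d" for z
  proof -
    have "\<bar>z\<bar> * 1 < \<bar>z\<bar> * \<bar>1 - (z + a) * (2 - z)\<bar>"
      using d[OF that] that(1) by (intro mult_strict_left_mono) auto
    then show ?thesis
      by (simp add: fmap_eq_mult abs_mult)
  qed
  with \<open>0 < d\<close> show ?thesis
    using that by blast
qed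

lemma fmap_orbit_at_top:
  assumes "0 < a" "2 < x"
  shows "filterlim (\<lambda>t. (fmap a ^^ t) x) at_top sequentially"
proof (rule filterlim_at_top_mono)
  show "filterlim (\<lambda>t. x + real t * (x - 2)) at_top sequentially"
    using assms by (intro filterlim_tendsto_add_at_top[OF tendsto_const]
        filterlim_at_top_mult_tendsto_pos[OF tendsto_const] filterlim_real_sequentially) auto
  have "x + real t * (x - 2) \<le> (fmap a ^^ t) x" for t
  proof (induction t)
    case (Suc t)
    define z where "z = (fmap a ^^ t) x"
    have "0 \<le> real t * (x - 2)"
      using assms by simp
    then have "x \<le> z"
      using Suc by (simp add: z_def)
    then have "1 \<le> z * (z + a)"
      using assms mult_mono[of 1 z 1 "z + a"] by simp
    then have "z - 2 \<le> z * (z + a) * (z - 2)"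
      using \<open>x \<le> z\<close> assms by (simp add: mult_le_cancel_right1)
    then show ?case
      using Suc fmap_diff_self_eq[of a z] \<open>x \<le> z\<close> by (simp add: z_def algebra_simps)
  qed simp
  then show "\<forall>\<^sub>F t in sequentially. x + real t * (x - 2) \<le> (fmap a ^^ t) x"
    by simp
qed


section \<open>The trapped set for large parameters is null\<close>

definition arcsin_coord :: "real \<Rightarrow> real \<Rightarrow> real" where
  "arcsin_coord a x = arcsin ((2 * x + a - 2) / (a + 2))"

lemma strict_mono_on_arcsin_coord:
  assumes "0 < a"
  shows "strict_mono_on {-a..2} (arcsin_coord a)"
proof (rule strict_mono_onI)
  fix x y
  assume "x \<in> {-a..2}" "y \<in> {-a..2}" "x < y"
  then show "arcsin_coord a x < arcsin_coord a y"
    using assms unfolding arcsin_coord_def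
    by (intro arcsin_less_arcsin) (auto simp: divide_le_eq le_divide_eq divide_strict_right_mono)
qed

lemma arcsin_coord_has_real_derivative:
  assumes "0 < a" "-a < x" "x < 2"
  shows "(arcsin_coord a has_real_derivative 1 / sqrt ((2 - x) * (x + a))) (at x)"
proof -
  define w where "w = (2 * x + a - 2) / (a + 2)"
  have "-1 < w" "w < 1"
    using assms by (auto simp: w_def divide_less_eq less_divide_eq)
  moreover have "((\<lambda>x. (2 * x + a - 2) / (a + 2)) has_real_derivative 2 / (a + 2)) (at x)"
    by (intro DERIV_cdivide) (auto intro!: derivative_eq_intros)
  ultimately have deriv:
    "(arcsin_coord a has_real_derivative inverse (sqrt (1 - w^2)) * (2 / (a + 2))) (at x)"
    unfolding arcsin_coord_def w_def by (rule DERIV_chain2[OF DERIV_arcsin])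
  have w: "w * (a + 2) = 2 * x + a - 2"
    using assms by (simp add: w_def)
  have "(1 - w^2) * (a + 2)^2 = (a + 2)^2 - (w * (a + 2))^2"
    by (simp add: power2_eq_square algebra_simps)
  also have "\<dots> = 4 * ((2 - x) * (x + a))"
    unfolding w by (simp add: power2_eq_square algebra_simps)
  finally have "1 - w^2 = 4 * ((2 - x) * (x + a)) / (a + 2)^2"
    using assms by (simp add: eq_divide_eq)
  then have "sqrt (1 - w^2) = 2 * sqrt ((2 - x) * (x + a)) / (a + 2)"
    using assms by (simp add: real_sqrt_divide real_sqrt_mult)
  then show ?thesis
    using deriv assms by (simp add: field_simps)
qed

lemma lmeasurable_arcsin_coord_image:
  assumes "0 < a" "A \<in> sets lebesgue" "A \<subseteq> {-a<..<2}"
  shows "arcsin_coord a ` A \<in> lmeasurable"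
proof (rule bounded_set_imp_lmeasurable)
  show "bounded (arcsin_coord a ` A)"
  proof (rule bounded_subset[OF bounded_closed_interval])
    have "arcsin_coord a x \<in> {-(pi/2)..pi/2}" if "x \<in> A" for x
      using that assms arcsin_bounded[of "(2 * x + a - 2) / (a + 2)"]
      by (auto simp: arcsin_coord_def divide_le_eq le_divide_eq)
    then show "arcsin_coord a ` A \<subseteq> {-(pi/2)..pi/2}"
      by auto
  qed
  show "arcsin_coord a ` A \<in> sets lebesgue"
  proof (rule sets_lebesgue_image_if_real_derivative[OF assms(2)])
    fix x
    assume "x \<in> A"
    then show "(arcsin_coord a has_real_derivative 1 / sqrt ((2 - x) * (x + a))) (at x within A)"
      using assms by (intro has_field_derivative_at_within[OF arcsin_coord_has_real_derivative]) auto
  qed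
qed

(* On (-a, 2) we have (3 x + 2 a - 1)^2 - 9 (x^2 + a x + 1) = (a - 2) (3 x + 4 a + 4) >= (a - 2) (a + 4)
   and x^2 + a x + 1 <= 2 a + 5, which is where the second summand comes from. *)
definition arcsin_expansion :: "real \<Rightarrow> real" where
  "arcsin_expansion a = sqrt (9 + (a - 2) * (a + 4) / (2 * a + 5))"

lemma arcsin_expansion_gt_three:
  assumes "2 < a"
  shows "3 < arcsin_expansion a"
proof -
  have "sqrt 9 < arcsin_expansion a"
    using assms unfolding arcsin_expansion_def by (intro real_sqrt_less_mono) simp
  moreover have "sqrt 9 = (3::real)"
    using real_sqrt_abs[of 3] by simp
  ultimately show ?thesis
    by simp
qed

lemma arcsin_expansion_le:
  assumes "2 < a" "-a < x" "x < 2"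
  shows "arcsin_expansion a * sqrt (x^2 + a * x + 1) \<le> \<bar>3 * x + 2 * a - 1\<bar>"
proof -
  define e where "e = (a - 2) * (a + 4) / (2 * a + 5)"
  have "x^2 + a * x + 1 \<le> 2 * a + 5"
    using assms mult_mono[of x 2 "x + a" "2 + a"] mult_nonpos_nonneg[of x "x + a"]
    by (cases "0 \<le> x") (auto simp: power2_eq_square algebra_simps)
  moreover have "0 \<le> e"
    using assms by (simp add: e_def)
  ultimately have "e * (x^2 + a * x + 1) \<le> e * (2 * a + 5)"
    by (intro mult_left_mono)
  also have "\<dots> = (a - 2) * (a + 4)"
    using assms by (simp add: e_def)
  also have "\<dots> \<le> (a - 2) * (3 * x + 4 * a + 4)"
    using assms by (intro mult_left_mono) auto
  finally have "(9 + e) * (x^2 + a * x + 1) \<le> (3 * x + 2 * a - 1)^2"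
    by (simp add: power2_eq_square algebra_simps)
  then have "sqrt ((9 + e) * (x^2 + a * x + 1)) \<le> sqrt ((3 * x + 2 * a - 1)^2)"
    by (rule real_sqrt_le_mono)
  then show ?thesis
    by (simp add: arcsin_expansion_def e_def real_sqrt_mult)
qed

lemma arcsin_coord_expands:
  assumes a: "2 < a" and x: "-a < x" "x < 2" and fx: "-a < fmap a x" "fmap a x < 2"
  shows "arcsin_expansion a * \<bar>1 / sqrt ((2 - x) * (x + a))\<bar>
    \<le> \<bar>1 / sqrt ((2 - fmap a x) * (fmap a x + a)) * ((x - 1) * (3 * x + 2 * a - 1))\<bar>"
proof -
  define D Q where "D = (2 - x) * (x + a)" and "Q = x^2 + a * x + 1"
  have "0 < D"
    using x by (simp add: D_def)
  have DQ: "(2 - fmap a x) * (fmap a x + a) = D * ((x - 1)^2 * Q)"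
    by (simp add: prod_dist_endpoints_fmap D_def Q_def)
  moreover have "0 < (2 - fmap a x) * (fmap a x + a)"
    using fx by simp
  ultimately have "0 < (x - 1)^2 * Q"
    using \<open>0 < D\<close> by (simp add: zero_less_mult_iff)
  then have "x \<noteq> 1" "0 < Q"
    by (auto simp: zero_less_mult_iff)
  have "arcsin_expansion a * \<bar>1 / sqrt D\<bar> = arcsin_expansion a * sqrt Q / (sqrt D * sqrt Q)"
    using \<open>0 < D\<close> \<open>0 < Q\<close> by simp
  also have "\<dots> \<le> \<bar>3 * x + 2 * a - 1\<bar> / (sqrt D * sqrt Q)"
    using arcsin_expansion_le[OF a x] \<open>0 < D\<close> \<open>0 < Q\<close>
    by (intro divide_right_mono) (simp_all add: Q_def)
  also have "\<dots> = \<bar>x - 1\<bar> * \<bar>3 * x + 2 * a - 1\<bar> / (sqrt D * (\<bar>x - 1\<bar> * sqrt Q))"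
    using \<open>x \<noteq> 1\<close> by simp
  also have "\<dots> = \<bar>1 / sqrt ((2 - fmap a x) * (fmap a x + a)) * ((x - 1) * (3 * x + 2 * a - 1))\<bar>"
    using \<open>0 < D\<close> \<open>0 < Q\<close> by (simp add: DQ real_sqrt_mult abs_mult)
  finally show ?thesis
    by (simp add: D_def)
qed

lemma sets_borel_fmap_branch:
  assumes "E \<in> sets borel"
  shows "{x \<in> {l<..<u}. fmap a x \<in> E} \<in> sets borel"
proof -
  have "{x \<in> {l<..<u}. fmap a x \<in> E} = {l<..<u} \<inter> (fmap a -` E \<inter> space borel)"
    by auto
  also have "\<dots> \<in> sets borel"
    using assms by (intro sets.Int[OF borel_open[OF open_greaterThanLessThan]]
        measurable_sets[OF borel_measurable_continuous_onI[OF continuous_on_fmap]])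
  finally show ?thesis .
qed

lemma measure_arcsin_coord_fmap_image_ge:
  assumes a: "2 < a" and S: "S \<in> sets lebesgue" "S \<subseteq> {-a<..<2}" "fmap a ` S \<subseteq> {-a<..<2}"
    and inj: "inj_on (fmap a) S"
  shows "arcsin_expansion a * measure lebesgue (arcsin_coord a ` S)
    \<le> measure lebesgue (arcsin_coord a ` fmap a ` S)"
proof -
  have inj_coord: "inj_on (arcsin_coord a) {-a..2}"
    using a by (intro strict_mono_on_imp_inj_on strict_mono_on_arcsin_coord) simp
  have img: "(\<lambda>x. arcsin_coord a (fmap a x)) ` S = arcsin_coord a ` fmap a ` S"
    by (simp add: image_image)
  have "arcsin_expansion a * measure lebesgue (arcsin_coord a ` S)
      \<le> measure lebesgue ((\<lambda>x. arcsin_coord a (fmap a x)) ` S)"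
  proof (rule measure_image_le_by_derivative[OF S(1)])
    fix x
    assume "x \<in> S"
    then have x: "-a < x" "x < 2" and fx: "-a < fmap a x" "fmap a x < 2"
      using S by auto
    show "(arcsin_coord a has_real_derivative 1 / sqrt ((2 - x) * (x + a))) (at x within S)"
      using a x by (intro has_field_derivative_at_within[OF arcsin_coord_has_real_derivative]) auto
    show "((\<lambda>x. arcsin_coord a (fmap a x)) has_real_derivative
        1 / sqrt ((2 - fmap a x) * (fmap a x + a)) * ((x - 1) * (3 * x + 2 * a - 1))) (at x within S)"
      using a fx by (intro DERIV_chain2 arcsin_coord_has_real_derivative fmap_has_real_derivative) auto
    show "arcsin_expansion a * \<bar>1 / sqrt ((2 - x) * (x + a))\<bar>
        \<le> \<bar>1 / sqrt ((2 - fmap a x) * (fmap a x + a)) * ((x - 1) * (3 * x + 2 * a - 1))\<bar>"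
      by (rule arcsin_coord_expands[OF a x fx])
  next
    show "inj_on (arcsin_coord a) S"
      using S(2) by (intro inj_on_subset[OF inj_coord]) auto
    have "inj_on (arcsin_coord a) (fmap a ` S)"
      using S(3) by (intro inj_on_subset[OF inj_coord]) auto
    then show "inj_on (\<lambda>x. arcsin_coord a (fmap a x)) S"
      using comp_inj_on[OF inj] by (simp add: o_def)
    show "arcsin_coord a ` S \<in> lmeasurable"
      using a S by (intro lmeasurable_arcsin_coord_image) auto
    have "fmap a ` S \<in> sets lebesgue"
      using S(1) fmap_has_real_derivative by (rule sets_lebesgue_image_if_real_derivative)
    then show "(\<lambda>x. arcsin_coord a (fmap a x)) ` S \<in> lmeasurable"
      unfolding img using a S(3) by (intro lmeasurable_arcsin_coord_image) auto
  qed
  then show ?thesis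
    by (simp only: img)
qed

lemma measure_arcsin_coord_branch_le:
  assumes a: "2 < a" and E: "E \<in> sets borel" "E \<subseteq> {-a<..<2}"
    and I: "-a \<le> l" "u \<le> 2" "inj_on (fmap a) {l<..<u}"
  shows "arcsin_expansion a * measure lebesgue (arcsin_coord a ` {x \<in> {l<..<u}. fmap a x \<in> E})
    \<le> measure lebesgue (arcsin_coord a ` E)"
proof -
  define S where "S = {x \<in> {l<..<u}. fmap a x \<in> E}"
  have S: "S \<in> sets lebesgue" "S \<subseteq> {-a<..<2}" "fmap a ` S \<subseteq> E"
    using sets_borel_fmap_branch[OF E(1)] I by (auto simp: S_def)
  have "inj_on (fmap a) S"
    by (rule inj_on_subset[OF I(3)]) (auto simp: S_def)
  then have "arcsin_expansion a * measure lebesgue (arcsin_coord a ` S)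
      \<le> measure lebesgue (arcsin_coord a ` fmap a ` S)"
    using a S E(2) by (intro measure_arcsin_coord_fmap_image_ge) auto
  also have "\<dots> \<le> measure lebesgue (arcsin_coord a ` E)"
  proof (rule measure_mono_fmeasurable)
    show "arcsin_coord a ` fmap a ` S \<subseteq> arcsin_coord a ` E"
      using S(3) by (rule image_mono)
    have "fmap a ` S \<in> sets lebesgue"
      using S(1) fmap_has_real_derivative by (rule sets_lebesgue_image_if_real_derivative)
    then show "arcsin_coord a ` fmap a ` S \<in> sets lebesgue"
      using a S(3) E(2) by (intro fmeasurableD[OF lmeasurable_arcsin_coord_image]) auto
    show "arcsin_coord a ` E \<in> lmeasurable"
      using a E by (intro lmeasurable_arcsin_coord_image) auto
  qed
  finally show ?thesis
    by (simp add: S_def)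
qed

(* The intervals of monotonicity of fmap a on (-a, 2), for a > 2; its critical points are
   (1 - 2 a) / 3 and 1. *)
definition fmap_laps :: "real \<Rightarrow> (real \<times> real) set" where
  "fmap_laps a = {(-a, (1 - 2 * a) / 3), ((1 - 2 * a) / 3, 1), (1, 2)}"

lemma fmap_laps_cover:
  assumes "2 < a"
  shows "{-a<..<2} \<subseteq> {(1 - 2 * a) / 3, 1} \<union> (\<Union>lu\<in>fmap_laps a. {fst lu<..<snd lu})"
proof
  fix x :: real
  assume x: "x \<in> {-a<..<2}"
  define c where "c = (1 - 2 * a) / 3"
  consider "x < c" | "x = c" | "c < x" "x < 1" | "x = 1" | "1 < x"
    by linarith
  then show "x \<in> {(1 - 2 * a) / 3, 1} \<union> (\<Union>lu\<in>fmap_laps a. {fst lu<..<snd lu})"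
    using x unfolding fmap_laps_def c_def[symmetric] by cases auto
qed

lemma fmap_lap_bounds_and_inj:
  assumes "2 < a" "(l, u) \<in> fmap_laps a"
  shows "-a \<le> l" "u \<le> 2" "inj_on (fmap a) {l<..<u}"
proof -
  define c where "c = (1 - 2 * a) / 3"
  have c: "-a < c" "c < 1" "\<And>x. 3 * x + 2 * a - 1 = 0 \<longleftrightarrow> x = c"
    using assms(1) by (auto simp: c_def field_simps)
  have lu: "(l, u) \<in> {(-a, c), (c, 1), (1, 2)}"
    using assms(2) by (simp add: fmap_laps_def c_def)
  then show "-a \<le> l" "u \<le> 2"
    using c by auto
  have "x \<noteq> 1 \<and> 3 * x + 2 * a - 1 \<noteq> 0" if "l < x" "x < u" for x
    using lu that c by auto
  then show "inj_on (fmap a) {l<..<u}"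
    by (intro inj_on_interval_if_deriv_nonzero[where f' = "\<lambda>x. (x - 1) * (3 * x + 2 * a - 1)"]
        fmap_has_real_derivative) simp
qed

lemma fmap_forward_invariant_subset_laps:
  assumes a: "2 < a" and E: "E \<subseteq> {-a<..<2}"
    and inv: "\<And>x. x \<in> E \<Longrightarrow> fmap a x \<in> E \<union> {-a, 2}"
  shows "E \<subseteq> (fmap a -` {-a, 2} \<union> {(1 - 2 * a) / 3, 1})
    \<union> (\<Union>lu\<in>fmap_laps a. {x \<in> {fst lu<..<snd lu}. fmap a x \<in> E})"
proof
  fix x
  assume "x \<in> E"
  show "x \<in> (fmap a -` {-a, 2} \<union> {(1 - 2 * a) / 3, 1})
    \<union> (\<Union>lu\<in>fmap_laps a. {x \<in> {fst lu<..<snd lu}. fmap a x \<in> E})"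
  proof (cases "fmap a x \<in> E")
    case True
    moreover have "x \<in> {(1 - 2 * a) / 3, 1} \<union> (\<Union>lu\<in>fmap_laps a. {fst lu<..<snd lu})"
      using fmap_laps_cover[OF a] E \<open>x \<in> E\<close> by blast
    ultimately show ?thesis
      by auto
  next
    case False
    then show ?thesis
      using inv[OF \<open>x \<in> E\<close>] by simp
  qed
qed

lemma measure_arcsin_coord_forward_invariant_le:
  assumes a: "2 < a" and E: "E \<in> sets borel" "E \<subseteq> {-a<..<2}"
    and inv: "\<And>x. x \<in> E \<Longrightarrow> fmap a x \<in> E \<union> {-a, 2}"
  shows "arcsin_expansion a * measure lebesgue (arcsin_coord a ` E)
    \<le> 3 * measure lebesgue (arcsin_coord a ` E)"
proof -
  define \<mu> where "\<mu> A = measure lebesgue (arcsin_coord a ` A)" for A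
  define F where "F = fmap a -` {-a, 2} \<union> {(1 - 2 * a) / 3, 1}"
  define S where "S lu = {x \<in> {fst lu<..<snd lu}. fmap a x \<in> E}" for lu
  have S_branch: "arcsin_expansion a * \<mu> (S lu) \<le> \<mu> E"
    and S_lmeas: "arcsin_coord a ` S lu \<in> lmeasurable" if "lu \<in> fmap_laps a" for lu
  proof -
    obtain l u where lu: "lu = (l, u)"
      by fastforce
    then have "-a \<le> l" "u \<le> 2" "inj_on (fmap a) {l<..<u}"
      using that fmap_lap_bounds_and_inj[OF a] by blast+
    then show "arcsin_expansion a * \<mu> (S lu) \<le> \<mu> E"
      unfolding \<mu>_def S_def lu using measure_arcsin_coord_branch_le[OF a E] by simp
    have "S lu \<in> sets lebesgue"
      using sets_borel_fmap_branch[OF E(1)] by (simp add: S_def)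
    then show "arcsin_coord a ` S lu \<in> lmeasurable"
      using a \<open>-a \<le> l\<close> \<open>u \<le> 2\<close> by (intro lmeasurable_arcsin_coord_image) (auto simp: S_def lu)
  qed
  have "F = fmap a -` {-a} \<union> fmap a -` {2} \<union> {(1 - 2 * a) / 3, 1}"
    by (auto simp: F_def)
  then have "negligible (arcsin_coord a ` F)"
    using finite_fmap_vimage_singleton by (simp add: negligible_finite)
  moreover have "E \<subseteq> F \<union> (\<Union>lu\<in>fmap_laps a. S lu)"
    using fmap_forward_invariant_subset_laps[OF a E(2) inv] by (simp add: F_def S_def)
  then have "arcsin_coord a ` E \<subseteq> arcsin_coord a ` F \<union> (\<Union>lu\<in>fmap_laps a. arcsin_coord a ` S lu)"
    using image_mono by (fastforce simp: image_Un image_UN)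
  moreover have "arcsin_coord a ` E \<in> sets lebesgue"
    using a E by (intro fmeasurableD[OF lmeasurable_arcsin_coord_image]) auto
  ultimately have "\<mu> E \<le> (\<Sum>lu\<in>fmap_laps a. \<mu> (S lu))"
    unfolding \<mu>_def using S_lmeas
    by (intro measure_le_sum_if_covered) (auto simp: fmap_laps_def)
  then have "arcsin_expansion a * \<mu> E \<le> (\<Sum>lu\<in>fmap_laps a. arcsin_expansion a * \<mu> (S lu))"
    using arcsin_expansion_gt_three[OF a] by (simp add: sum_distrib_left[symmetric])
  also have "\<dots> \<le> (\<Sum>lu\<in>fmap_laps a. \<mu> E)"
    using S_branch by (rule sum_mono)
  also have "\<dots> \<le> 3 * \<mu> E"
    by (simp add: \<mu>_def fmap_laps_def card_insert_if)
  finally show ?thesis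
    by (simp add: \<mu>_def)
qed

lemma negligible_fmap_forward_invariant:
  assumes a: "2 < a" and E: "E \<in> sets borel" "E \<subseteq> {-a<..<2}"
    and inv: "\<And>x. x \<in> E \<Longrightarrow> fmap a x \<in> E \<union> {-a, 2}"
  shows "negligible E"
proof -
  define \<mu> where "\<mu> = measure lebesgue (arcsin_coord a ` E)"
  have lmeas: "arcsin_coord a ` E \<in> lmeasurable"
    using a E by (intro lmeasurable_arcsin_coord_image) auto
  have "(arcsin_expansion a - 3) * \<mu> \<le> 0"
    using measure_arcsin_coord_forward_invariant_le[OF a E inv] by (simp add: \<mu>_def algebra_simps)
  then have "\<mu> = 0"
    using arcsin_expansion_gt_three[OF a] measure_nonneg[of lebesgue "arcsin_coord a ` E"]
    by (simp add: \<mu>_def mult_le_0_iff)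
  then have "negligible (arcsin_coord a ` E)"
    using lmeas by (simp add: \<mu>_def negligible_iff_measure0)
  then have "negligible {x \<in> {-a<..<2}. arcsin_coord a x \<in> arcsin_coord a ` E}"
  proof (rule negligible_differentiable_vimage[where f' = "\<lambda>x. (*) (1 / sqrt ((2 - x) * (x + a)))"])
    fix x
    assume "x \<in> {-a<..<2}"
    then have x: "-a < x" "x < 2"
      by auto
    then show "inj ((*) (1 / sqrt ((2 - x) * (x + a))))"
      by (simp add: inj_on_def)
    show "(arcsin_coord a has_derivative (*) (1 / sqrt ((2 - x) * (x + a)))) (at x within {-a<..<2})"
      using arcsin_coord_has_real_derivative[of a x] a x
      by (simp add: has_field_derivative_def has_derivative_at_withinI)
  qed
  moreover have "E \<subseteq> {x \<in> {-a<..<2}. arcsin_coord a x \<in> arcsin_coord a ` E}"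
    using E(2) by auto
  ultimately show ?thesis
    by (rule negligible_subset)
qed

lemma closed_fmap_trapped: "closed {x. \<forall>t. (fmap a ^^ t) x \<in> {-a..2}}"
proof -
  have "{x. \<forall>t. (fmap a ^^ t) x \<in> {-a..2}} = (\<Inter>t. (fmap a ^^ t) -` {-a..2})"
    by auto
  also have "closed \<dots>"
    using continuous_on_funpow[OF continuous_on_fmap]
    by (intro closed_INT ballI continuous_closed_vimage closed_atLeastAtMost)
      (simp add: continuous_on_eq_continuous_at)
  finally show ?thesis .
qed

lemma null_sets_fmap_trapped:
  assumes a: "2 < a"
  shows "{x. \<forall>t. (fmap a ^^ t) x \<in> {-a..2}} \<in> null_sets lborel"
proof -
  define K where "K = {x. \<forall>t. (fmap a ^^ t) x \<in> {-a..2}}"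
  have K_borel: "K \<in> sets borel"
    using closed_fmap_trapped by (simp add: K_def)
  have "(fmap a ^^ t) (fmap a x) \<in> {-a..2}" if "x \<in> K" for x t
  proof -
    have "(fmap a ^^ Suc t) x \<in> {-a..2}"
      using that unfolding K_def by blast
    then show ?thesis
      by (simp only: funpow_Suc_right o_apply)
  qed
  then have K_fmap: "fmap a x \<in> K" if "x \<in> K" for x
    using that by (simp add: K_def)
  have K_box: "K \<subseteq> {-a..2}"
    unfolding K_def by (force dest: spec[of _ 0])
  have "fmap a x \<in> (K \<inter> {-a<..<2}) \<union> {-a, 2}" if "x \<in> K" for x
  proof -
    have "fmap a x \<in> K" "fmap a x \<in> {-a..2}"
      using K_fmap[OF that] K_box by auto
    then show ?thesis
      by auto
  qed
  then have "negligible (K \<inter> {-a<..<2})"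
    using a K_borel by (intro negligible_fmap_forward_invariant) auto
  then have "negligible K"
    by (rule negligible_subset[OF negligible_Un[OF _ negligible_finite[of "{-a, 2}"]]]) (use K_box in auto)
  then have "K \<in> null_sets lebesgue"
    by (simp add: negligible_iff_null_sets)
  then show ?thesis
    using null_sets_completion_iff[of K lborel] K_borel by (simp add: K_def)
qed


section \<open>Generic initializations\<close>

definition fmap_exceptional :: "real \<Rightarrow> real set" where
  "fmap_exceptional a = {x. \<exists>t. (fmap a ^^ t) x \<in> {-a, 0, 2}}
    \<union> {x. 2 < a \<and> (\<forall>t. (fmap a ^^ t) x \<in> {-a..2})}"

lemma null_sets_fmap_exceptional: "fmap_exceptional a \<in> null_sets lborel"
proof -
  have "{x. \<exists>t. (fmap a ^^ t) x \<in> {-a, 0, 2}} \<in> null_sets lborel"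
    by (intro countable_imp_null_set_lborel countable_orbits_hitting_finite_set
        finite_fmap_vimage_singleton) simp
  moreover have "{x. 2 < a \<and> (\<forall>t. (fmap a ^^ t) x \<in> {-a..2})} \<in> null_sets lborel"
    using null_sets_fmap_trapped[of a] by (cases "2 < a") auto
  ultimately show ?thesis
    unfolding fmap_exceptional_def by (rule null_sets.Un)
qed

lemma fmap_generic_orbit_tendsto_zero:
  assumes "0 < a" "a \<le> 1" "-a \<le> x" "x \<le> 2" "x \<notin> fmap_exceptional a"
  shows "(\<lambda>t. (fmap a ^^ t) x) \<longlonglongrightarrow> 0"
  using assms by (intro fmap_orbit_tendsto_zero) (auto simp: fmap_exceptional_def)

lemma fmap_generic_orbit_not_tendsto_zero:
  assumes "1 < a" "x \<notin> fmap_exceptional a"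
  shows "\<not> (\<lambda>t. (fmap a ^^ t) x) \<longlonglongrightarrow> 0"
proof
  assume "(\<lambda>t. (fmap a ^^ t) x) \<longlonglongrightarrow> 0"
  moreover obtain d where "0 < d" "\<And>z. z \<noteq> 0 \<Longrightarrow> \<bar>z\<bar> < d \<Longrightarrow> \<bar>z\<bar> < \<bar>fmap a z\<bar>"
    using fmap_repels_zero[OF assms(1)] by blast
  ultimately obtain t where "(fmap a ^^ t) x = 0"
    using orbit_tendsto_repelling_fixpoint[of d "fmap a" x] by auto
  then show False
    using assms(2) by (auto simp: fmap_exceptional_def)
qed

lemma fmap_generic_orbit_at_top:
  assumes a: "2 < a" and x: "-a \<le> x" "x \<notin> fmap_exceptional a"
  shows "filterlim (\<lambda>t. (fmap a ^^ t) x) at_top sequentially"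
proof -
  obtain t where "(fmap a ^^ t) x \<notin> {-a..2}"
    using a x(2) by (auto simp: fmap_exceptional_def)
  moreover have "-a \<le> (fmap a ^^ t) x"
    by (induction t) (simp_all add: x(1) fmap_ge)
  ultimately have "filterlim (\<lambda>k. (fmap a ^^ k) ((fmap a ^^ t) x)) at_top sequentially"
    using a by (intro fmap_orbit_at_top) auto
  then have "\<forall>\<^sub>F k in sequentially. Z \<le> (fmap a ^^ (k + t)) x" for Z
    by (simp add: filterlim_at_top funpow_add)
  then show ?thesis
    unfolding filterlim_at_top using eventually_sequentially_seg by blast
qed

lemma loss_at_generic_initialization:
  fixes \<eta> \<gamma> :: real and X :: "'n::finite \<Rightarrow> real ^ 'd" and a :: "'n \<Rightarrow> real"
  assumes "\<eta> > 0" and "\<gamma> \<noteq> 0" and "\<And>i. X i \<noteq> 0" and a: "\<And>i. a i > 0"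
    and box: "z0 \<in> init_box a" and generic: "\<And>i. z0 $ i \<notin> fmap_exceptional (a i)"
  shows "(0 < Max (range a) \<and> Max (range a) \<le> 1 \<longrightarrow> loss \<eta> \<gamma> X a z0 \<longlonglongrightarrow> 0)
    \<and> (0 < Max (range a) \<and> Max (range a) \<le> 2 * sqrt 2 - 2 \<longrightarrow> decseq (loss \<eta> \<gamma> X a z0))
    \<and> (1 < Max (range a) \<and> Max (range a) \<le> 2 \<longrightarrow>
         Bseq (loss \<eta> \<gamma> X a z0) \<and> \<not> (loss \<eta> \<gamma> X a z0 \<longlonglongrightarrow> 0))
    \<and> (Max (range a) > 2 \<longrightarrow> filterlim (loss \<eta> \<gamma> X a z0) at_top sequentially)"
proof -
  define M where "M = Max (range a)"
  define w where "w i = real CARD('n) / (2 * \<eta>^2 * \<gamma>^2 * norm (X i)^4)" for i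
  define u where "u i t = (fmap (a i) ^^ t) (z0 $ i)" for i t
  have w: "0 < w i" for i
    using assms(1-3) by (simp add: w_def)
  have loss: "loss \<eta> \<gamma> X a z0 = (\<lambda>t. \<Sum>i\<in>UNIV. w i * (u i t)^2)"
    by (simp add: fun_eq_iff loss_def traj_def w_def u_def)
  have "M \<in> range a"
    unfolding M_def by (rule Max_in) auto
  then obtain i0 where i0: "a i0 = M"
    by auto
  have a_le: "a i \<le> M" for i
    by (simp add: M_def)
  have x: "-a i \<le> z0 $ i" "z0 $ i \<le> 2" for i
    using box by (auto simp: init_box_def)
  have "M \<le> 1 \<longrightarrow> loss \<eta> \<gamma> X a z0 \<longlonglongrightarrow> 0"
    using fmap_generic_orbit_tendsto_zero[OF a _ x generic] a_le
    by (auto simp: loss weighted_sum_squares_tendsto_zero_iff[OF w] u_def[abs_def] intro: order_trans)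
  moreover have "M \<le> 2 * sqrt 2 - 2 \<longrightarrow> decseq (loss \<eta> \<gamma> X a z0)"
  proof
    assume "M \<le> 2 * sqrt 2 - 2"
    then have "\<bar>u i (Suc t)\<bar> \<le> \<bar>u i t\<bar>" for i t
      unfolding u_def using abs_funpow_fmap_Suc_le[OF a _ x] a_le[of i] by simp
    then show "decseq (loss \<eta> \<gamma> X a z0)"
      unfolding loss by (rule decseq_weighted_sum_squares[OF less_imp_le[OF w]])
  qed
  moreover have "M \<le> 2 \<longrightarrow> Bseq (loss \<eta> \<gamma> X a z0)"
  proof
    assume "M \<le> 2"
    then have "\<bar>u i t\<bar> \<le> 2" for i t
      using funpow_fmap_mem_box[OF a _ x, of i t] a_le[of i] by (auto simp: u_def)
    then show "Bseq (loss \<eta> \<gamma> X a z0)"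
      unfolding loss by (rule Bseq_weighted_sum_squares)
  qed
  moreover have "1 < M \<longrightarrow> \<not> loss \<eta> \<gamma> X a z0 \<longlonglongrightarrow> 0"
    using fmap_generic_orbit_not_tendsto_zero[OF _ generic, of i0] i0
    by (auto simp: loss weighted_sum_squares_tendsto_zero_iff[OF w] u_def[abs_def])
  moreover have "2 < M \<longrightarrow> filterlim (loss \<eta> \<gamma> X a z0) at_top sequentially"
    using fmap_generic_orbit_at_top[OF _ x(1) generic, of i0] i0
    by (auto simp: loss u_def[abs_def] intro!: weighted_sum_squares_at_top[OF less_imp_le[OF w] w])
  ultimately show ?thesis
    by (simp add: M_def)
qed

theorem corollary1:
  fixes \<eta> \<gamma> :: real and X :: "'n::finite \<Rightarrow> real ^ 'd" and a :: "'n \<Rightarrow> real"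
  assumes "\<eta> > 0" and "\<gamma> \<noteq> 0"
    and "\<And>i. X i \<noteq> 0" and "\<And>i. a i > 0"
  shows "AE z0 in lebesgue. z0 \<in> init_box a \<longrightarrow>
     ((0 < Max (range a) \<and> Max (range a) \<le> 1 \<longrightarrow> loss \<eta> \<gamma> X a z0 \<longlonglongrightarrow> 0)
    \<and> (0 < Max (range a) \<and> Max (range a) \<le> 2 * sqrt 2 - 2 \<longrightarrow> decseq (loss \<eta> \<gamma> X a z0))
    \<and> (1 < Max (range a) \<and> Max (range a) \<le> 2 \<longrightarrow>
         Bseq (loss \<eta> \<gamma> X a z0) \<and> \<not> (loss \<eta> \<gamma> X a z0 \<longlonglongrightarrow> 0))
    \<and> (Max (range a) > 2 \<longrightarrow> filterlim (loss \<eta> \<gamma> X a z0) at_top sequentially))"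
proof -
  have "AE z0 in lebesgue. \<forall>i. z0 $ i \<notin> fmap_exceptional (a i)"
    by (rule AE_lebesgue_components_not_in[OF null_sets_fmap_exceptional])
  then show ?thesis
    by (rule eventually_mono) (intro impI loss_at_generic_initialization[OF assms], auto)
qed

end
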